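(* Let $n\ge r$, let $\mathbf{A}_1,\dots,\mathbf{A}_K\in\mathbb{R}^{n\times r}$ and $c_1,\dots,c_K\in\mathbb{R}$. Let $\Delta=\{\boldsymbol{\mu}\in\mathbb{R}^K:\mu_k\ge0,\ \sum_k\mu_k=1\}$ and $\mathbf{A}(\boldsymbol{\mu})=\sum_{k=1}^K\mu_k\mathbf{A}_k$. Then $$\max_{\mathbf{U}^T\mathbf{U}\preccurlyeq\mathbf{I}_r}\ \min_{1\le k\le K}\big(2\,\mathrm{Tr}(\mathbf{A}_k^T\mathbf{U})+c_k\big)=\min_{\boldsymbol{\mu}\in\Delta}\Big(2\|\mathbf{A}(\boldsymbol{\mu})\|_*+\sum_{k=1}^K\mu_kc_k\Big).$$ Moreover, if $\boldsymbol{\mu}^*$ is a minimizer of the right-hand side and $\mathbf{A}(\boldsymbol{\mu}^* )$ has full column rank, then $\mathbf{U}^*=\mathbf{A}(\boldsymbol{\mu}^* )\big(\mathbf{A}(\boldsymbol{\mu}^* )^T\mathbf{A}(\boldsymbol{\mu}^* )\big)^{-1/2}$ is a maximizer of the left-hand side, and $(\mathbf{U}^* )^T\mathbf{U}^*=\mathbf{I}_r$.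
   Context: $\|\cdot\|_*$ denotes the nuclear norm (sum of singular values). $\mathbf{A}\preccurlyeq\mathbf{B}$ means $\mathbf{B}-\mathbf{A}$ is positive semidefinite. In the FPCA algorithm, $\mathbf{A}_k=\mathbf{R}_k\mathbf{U}^t$ and $c_k=-\mathrm{Tr}((\mathbf{U}^t)^T\mathbf{R}_k\mathbf{U}^t)$ for the current iterate $\mathbf{U}^t$. *)

theory Defs
  imports "HOL-Analysis.Analysis"
begin

definition psd :: "real^'n^'n \<Rightarrow> bool" where
  "psd S \<longleftrightarrow> transpose S = S \<and> (\<forall>x. 0 \<le> x \<bullet> (S *v x))"

definition loewner_le :: "real^'n^'n \<Rightarrow> real^'n^'n \<Rightarrow> bool" where
  "loewner_le A B \<longleftrightarrow> psd (B - A)"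

definition psd_sqrt :: "real^'n^'n \<Rightarrow> real^'n^'n" where
  "psd_sqrt X = (THE S. psd S \<and> S ** S = X)"

(* Nuclear norm ||M||_* = sum of singular values = Tr((M^T M)^(1/2)). *)
definition nuclear_norm :: "real^'r^'n \<Rightarrow> real" where
  "nuclear_norm M = trace (psd_sqrt (transpose M ** M))"

end

theory Submission
  imports Defs
begin

text \<open>Read Tr(X^T U) as the inner product X \<bullet> U of matrices. For fixed weights mu, the maximum of
  A(mu) \<bullet> U over contractions U (that is, U^T U <= I) is the nuclear norm of A(mu): in an orthonormal
  basis of eigenvectors b of A(mu)^T A(mu) the vectors A(mu) b are orthogonal, so
  A(mu) \<bullet> U = sum_b A(mu) b \<bullet> U b <= sum_b |A(mu) b|, with equality for the partial isometry
  b |-> sgn (A(mu) b). Averaging the minimum over k with weights mu gives weak duality.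
  For strong duality, the payoff vectors (2 A_k \<bullet> U + c_k)_k of all contractions, closed downwards,
  form a convex set missing the open orthant above the maximin value; a separating hyperplane has a
  nonnegative normal, which normalised is a minimising mu. If A(mu*) has full column rank, the
  contraction attaining its nuclear norm is unique and equals A(mu*) (A(mu*)^T A(mu*))^(-1/2), an
  isometry; by complementary slackness every maximiser of the left-hand side attains that nuclear
  norm, hence is this matrix.\<close>

lemma linear_coeff_eq_0_if_quadratic_nonneg:
  fixes a C :: real
  assumes "\<And>t. 0 \<le> 2 * t * a + t\<^sup>2 * C"
  shows "a = 0"
proof (rule ccontr)
  assume "a \<noteq> 0"
  define k where "k = \<bar>C\<bar> + 1"
  have k: "k > 0" "C \<le> k" unfolding k_def by auto
  define t where "t = - a / k"
  have "2 * t * a = - 2 * (a\<^sup>2 / k)" and "t\<^sup>2 * C = (a\<^sup>2 / k\<^sup>2) * C"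
    unfolding t_def by (simp_all add: power2_eq_square power_divide)
  moreover have "(a\<^sup>2 / k\<^sup>2) * C \<le> (a\<^sup>2 / k\<^sup>2) * k"
    using k by (intro mult_left_mono) auto
  moreover have "(a\<^sup>2 / k\<^sup>2) * k = a\<^sup>2 / k"
    using k by (simp add: power2_eq_square)
  moreover have "a\<^sup>2 / k > 0"
    using k \<open>a \<noteq> 0\<close> by simp
  ultimately show False using assms[of t] by linarith
qed

lemma inner_vector_matrix_mult:
  fixes A :: "real^'r^'n"
  shows "x \<bullet> (z v* A) = (A *v x) \<bullet> z"
  by (metis dot_lmul_matrix inner_commute)

lemma inner_symmetric_mult:
  fixes X :: "real^'n^'n"
  assumes "transpose X = X"
  shows "x \<bullet> (X *v y) = (X *v x) \<bullet> y"
  using inner_vector_matrix_mult[of x y X] assms transpose_matrix_vector[of X y] by simp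

lemma inner_gram_mult:
  fixes M :: "real^'r^'n"
  shows "x \<bullet> ((transpose M ** M) *v y) = (M *v x) \<bullet> (M *v y)"
  by (simp only: matrix_vector_mul_assoc[symmetric] transpose_matrix_vector inner_vector_matrix_mult)

lemma symmetric_gram: "transpose (transpose M ** M) = transpose M ** (M :: real^'r^'n)"
  by (simp add: matrix_transpose_mul)

lemma trace_transpose_mult_eq_inner:
  fixes A U :: "real^'r^'n"
  shows "trace (transpose A ** U) = A \<bullet> U"
  by (simp add: trace_def matrix_matrix_mult_def transpose_def inner_vec_def) (rule sum.swap)

section \<open>Spectral theorem for symmetric matrices\<close>

lemma symmetric_invariant_subspace_has_eigenvector:
  fixes X :: "real^'n^'n"
  assumes sym: "transpose X = X" and V: "subspace V" "V \<noteq> {0}"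
    and inv: "\<forall>x\<in>V. X *v x \<in> V"
  shows "\<exists>x\<in>V. norm x = 1 \<and> X *v x = (x \<bullet> (X *v x)) *\<^sub>R x"
proof -
  define q where "q = (\<lambda>x. x \<bullet> (X *v x))"
  define K where "K = V \<inter> sphere 0 1"
  have "compact K" unfolding K_def
    by (simp add: closed_Int_compact closed_subspace V)
  obtain v where v: "v \<in> V" "v \<noteq> 0" using V subspace_0 by blast
  then have "v /\<^sub>R norm v \<in> K" unfolding K_def using V by (simp add: subspace_scale)
  moreover have "continuous_on K q" unfolding q_def
    by (intro continuous_intros linear_continuous_on matrix_vector_mul_bounded_linear)
  ultimately obtain x where "x \<in> K" and xmax: "\<forall>y\<in>K. q y \<le> q x"
    using continuous_attains_sup[OF \<open>compact K\<close>] by blast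
  then have xV: "x \<in> V" and nx: "norm x = 1" unfolding K_def by auto
  have xx: "x \<bullet> x = 1" using nx by (simp add: dot_square_norm)
  define lam where "lam = q x"
  have rayleigh: "q z \<le> lam * (z \<bullet> z)" if "z \<in> V" for z
  proof (cases "z = 0")
    case True then show ?thesis by (simp add: q_def)
  next
    case False
    have "z /\<^sub>R norm z \<in> K" unfolding K_def using that False V by (simp add: subspace_scale)
    then have "q (z /\<^sub>R norm z) \<le> lam" using xmax lam_def by blast
    moreover have "q (z /\<^sub>R norm z) = q z / (norm z)\<^sup>2"
      by (simp add: q_def matrix_vector_mult_scaleR power2_eq_square field_simps)
    ultimately show ?thesis using False by (simp add: divide_le_eq dot_square_norm)
  qed
  have perp: "- (y \<bullet> (X *v x)) = 0" if y: "y \<in> V" "y \<bullet> x = 0" for y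
  proof (rule linear_coeff_eq_0_if_quadratic_nonneg)
    fix t
    have "x + t *\<^sub>R y \<in> V" using xV y V by (simp add: subspace_add subspace_scale)
    have "q (x + t *\<^sub>R y) = lam + 2 * t * (y \<bullet> (X *v x)) + t\<^sup>2 * q y"
      unfolding q_def lam_def
      by (simp add: matrix_vector_right_distrib matrix_vector_mult_scaleR inner_add_left
          inner_add_right inner_symmetric_mult[OF sym, of x y] inner_commute[of "X *v x" y]
          power2_eq_square algebra_simps)
    moreover have "(x + t *\<^sub>R y) \<bullet> (x + t *\<^sub>R y) = 1 + t\<^sup>2 * (y \<bullet> y)"
      using xx y(2) by (simp add: inner_add_left inner_add_right inner_commute power2_eq_square)
    ultimately have "lam + 2 * t * (y \<bullet> (X *v x)) + t\<^sup>2 * q y \<le> lam * (1 + t\<^sup>2 * (y \<bullet> y))"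
      using rayleigh[OF \<open>x + t *\<^sub>R y \<in> V\<close>] by simp
    then show "0 \<le> 2 * t * - (y \<bullet> (X *v x)) + t\<^sup>2 * (lam * (y \<bullet> y) - q y)"
      by (simp add: algebra_simps)
  qed
  define w where "w = X *v x - lam *\<^sub>R x"
  have "w \<in> V" unfolding w_def using inv xV V by (simp add: subspace_diff subspace_scale)
  moreover have wx: "w \<bullet> x = 0" unfolding w_def lam_def q_def using xx
    by (simp add: inner_diff_left inner_diff_right inner_commute)
  ultimately have "w \<bullet> (X *v x) = 0" using perp by simp
  then have "w \<bullet> w = 0" using wx unfolding w_def by (simp add: inner_diff_right)
  then show ?thesis using xV nx unfolding w_def lam_def q_def by auto
qed

definition orthonormal_basis :: "'a::real_inner set \<Rightarrow> bool" where
  "orthonormal_basis B \<longleftrightarrow>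
     finite B \<and> (\<forall>b\<in>B. \<forall>c\<in>B. b \<bullet> c = (if b = c then 1 else 0)) \<and> span B = UNIV"

lemma symmetric_invariant_subspace_eigenbasis:
  fixes X :: "real^'n^'n"
  assumes sym: "transpose X = X"
  shows "subspace V \<Longrightarrow> \<forall>x\<in>V. X *v x \<in> V \<Longrightarrow>
    \<exists>B. finite B \<and> B \<subseteq> V \<and> V \<subseteq> span B \<and> (\<forall>b\<in>B. \<forall>c\<in>B. b \<bullet> c = (if b = c then 1 else 0))
      \<and> (\<forall>b\<in>B. X *v b = (b \<bullet> (X *v b)) *\<^sub>R b)"
proof (induction "dim V" arbitrary: V rule: less_induct)
  case less
  show ?case
  proof (cases "V = {0}")
    case True then show ?thesis by (intro exI[of _ "{}"]) auto
  next
    case False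
    obtain x where xV: "x \<in> V" and nx: "norm x = 1" and ex: "X *v x = (x \<bullet> (X *v x)) *\<^sub>R x"
      using symmetric_invariant_subspace_has_eigenvector[OF sym less.prems(1) False less.prems(2)]
      by blast
    have xx: "x \<bullet> x = 1" using nx by (simp add: dot_square_norm)
    define W where "W = V \<inter> {y. x \<bullet> y = 0}"
    have W: "subspace W" unfolding W_def by (intro subspace_inter less.prems(1) subspace_hyperplane)
    have "\<forall>y\<in>W. X *v y \<in> W"
    proof
      fix y assume y: "y \<in> W"
      have "x \<bullet> (X *v y) = (X *v x) \<bullet> y" by (rule inner_symmetric_mult[OF sym])
      also have "\<dots> = 0" using y unfolding W_def by (subst ex) simp
      finally show "X *v y \<in> W" using y less.prems(2) unfolding W_def by auto
    qed
    moreover have "dim W < dim V"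
    proof (rule dim_psubset)
      have "x \<notin> W" using xx unfolding W_def by auto
      then have "W \<subset> V" using xV unfolding W_def by blast
      then show "span W \<subset> span V" using W less.prems(1) by (simp add: span_eq_iff[THEN iffD2])
    qed
    ultimately obtain B where B: "finite B" "B \<subseteq> W" "W \<subseteq> span B"
      "\<forall>b\<in>B. \<forall>c\<in>B. b \<bullet> c = (if b = c then 1 else 0)" "\<forall>b\<in>B. X *v b = (b \<bullet> (X *v b)) *\<^sub>R b"
      using less.hyps[OF _ W] by blast
    have "V \<subseteq> span (insert x B)"
    proof
      fix v assume v: "v \<in> V"
      have "v - (x \<bullet> v) *\<^sub>R x \<in> W" unfolding W_def using v xV xx less.prems(1)
        by (simp add: subspace_diff subspace_scale inner_diff_right)
      then show "v \<in> span (insert x B)" using B(3) unfolding span_breakdown_eq by blast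
    qed
    moreover have "\<forall>b\<in>B. x \<bullet> b = 0 \<and> b \<bullet> x = 0" using B(2) unfolding W_def by (auto simp: inner_commute)
    moreover have "x \<notin> B" using B(2) xx unfolding W_def by auto
    ultimately show ?thesis
      using B xV xx ex W_def by (intro exI[of _ "insert x B"]) auto
  qed
qed

theorem symmetric_matrix_orthonormal_eigenbasis:
  fixes X :: "real^'n^'n"
  assumes "transpose X = X"
  obtains B where "orthonormal_basis B" "\<forall>b\<in>B. X *v b = (b \<bullet> (X *v b)) *\<^sub>R b"
  using symmetric_invariant_subspace_eigenbasis[OF assms, of UNIV]
  unfolding orthonormal_basis_def by (auto intro: span_mono)

lemma orthonormal_basis_sum_inner:
  fixes g :: "'a::real_inner \<Rightarrow> 'b::real_vector"
  assumes "orthonormal_basis B" "c \<in> B"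
  shows "(\<Sum>b\<in>B. (b \<bullet> c) *\<^sub>R g b) = g c"
proof -
  have "finite B" using assms(1) unfolding orthonormal_basis_def by auto
  then have "(\<Sum>b\<in>B. (b \<bullet> c) *\<^sub>R g b) = (\<Sum>b\<in>B. if b = c then g c else 0)"
    using assms unfolding orthonormal_basis_def by (intro sum.cong) auto
  then show ?thesis using assms(2) \<open>finite B\<close> by simp
qed

lemma orthonormal_basis_expansion:
  assumes "orthonormal_basis B"
  shows "(\<Sum>b\<in>B. (b \<bullet> y) *\<^sub>R b) = y"
proof -
  have "finite B" "y \<in> span B" using assms unfolding orthonormal_basis_def by auto
  then obtain u where u: "y = (\<Sum>b\<in>B. u b *\<^sub>R b)" using span_finite by auto
  have "c \<bullet> y = u c" if "c \<in> B" for c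
    using orthonormal_basis_sum_inner[OF assms that, of u] unfolding u
    by (simp add: inner_sum_right inner_commute mult.commute)
  then show ?thesis using u by simp
qed

lemma orthonormal_basis_inner:
  assumes "orthonormal_basis B"
  shows "y \<bullet> z = (\<Sum>b\<in>B. (b \<bullet> y) * (b \<bullet> z))"
proof -
  have "y \<bullet> z = (\<Sum>b\<in>B. (b \<bullet> y) *\<^sub>R b) \<bullet> z" using orthonormal_basis_expansion[OF assms] by simp
  then show ?thesis by (simp only: inner_sum_left inner_scaleR_left)
qed

lemma orthonormal_basis_vector_eqI:
  assumes "orthonormal_basis B" "\<And>b. b \<in> B \<Longrightarrow> b \<bullet> x = b \<bullet> y"
  shows "x = y"
proof -
  have "x = (\<Sum>b\<in>B. (b \<bullet> x) *\<^sub>R b)" by (rule orthonormal_basis_expansion[OF assms(1), symmetric])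
  also have "\<dots> = (\<Sum>b\<in>B. (b \<bullet> y) *\<^sub>R b)" using assms(2) by simp
  also have "\<dots> = y" by (rule orthonormal_basis_expansion[OF assms(1)])
  finally show ?thesis .
qed

lemma orthonormal_basis_matrix_eqI:
  fixes U V :: "real^'n^'m"
  assumes "orthonormal_basis B" "\<And>b. b \<in> B \<Longrightarrow> U *v b = V *v b"
  shows "U = V"
proof -
  have "U *v y = V *v y" for y
  proof -
    have "U *v y = (\<Sum>b\<in>B. (b \<bullet> y) *\<^sub>R (U *v b))"
      by (subst (1) orthonormal_basis_expansion[OF assms(1), of y, symmetric])
        (simp add: vec.sum matrix_vector_mult_scaleR)
    also have "\<dots> = (\<Sum>b\<in>B. (b \<bullet> y) *\<^sub>R (V *v b))" using assms(2) by simp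
    also have "\<dots> = V *v y"
      by (subst (2) orthonormal_basis_expansion[OF assms(1), of y, symmetric])
        (simp add: vec.sum matrix_vector_mult_scaleR)
    finally show ?thesis .
  qed
  then show ?thesis by (simp add: matrix_eq)
qed

lemma trace_eq_sum_orthonormal_basis:
  fixes T :: "real^'n^'n"
  assumes "orthonormal_basis B"
  shows "trace T = (\<Sum>b\<in>B. b \<bullet> (T *v b))"
proof -
  have delta: "(\<Sum>b\<in>B. b$i * b$j) = (if i = j then 1 else 0)" for i j
    using orthonormal_basis_inner[OF assms, of "axis i 1" "axis j 1"]
    by (simp only: inner_axis_axis) (simp add: inner_axis split: if_splits)
  have "(\<Sum>b\<in>B. b \<bullet> (T *v b)) = (\<Sum>i\<in>UNIV. \<Sum>j\<in>UNIV. T$i$j * (\<Sum>b\<in>B. b$i * b$j))"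
    by (simp add: inner_vec_def matrix_vector_mult_def sum_distrib_left algebra_simps sum.swap[of _ B])
  also have "\<dots> = trace T"
    by (simp add: delta trace_def if_distrib cong: if_cong)
  finally show ?thesis ..
qed

lemma inner_eq_sum_orthonormal_basis:
  fixes M U :: "real^'r^'n"
  assumes "orthonormal_basis B"
  shows "M \<bullet> U = (\<Sum>b\<in>B. (M *v b) \<bullet> (U *v b))"
  by (simp add: trace_transpose_mult_eq_inner[symmetric] trace_eq_sum_orthonormal_basis[OF assms]
      matrix_vector_mul_assoc[symmetric] inner_vector_matrix_mult)

definition matrix_on_basis :: "(real^'r) set \<Rightarrow> (real^'r \<Rightarrow> real^'n) \<Rightarrow> real^'r^'n" where
  "matrix_on_basis B u = (\<chi> i j. \<Sum>b\<in>B. (u b)$i * b$j)"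

lemma matrix_on_basis_mult: "matrix_on_basis B u *v y = (\<Sum>b\<in>B. (b \<bullet> y) *\<^sub>R u b)"
  by (simp add: vec_eq_iff matrix_on_basis_def matrix_vector_mult_def inner_vec_def sum_component
      sum_distrib_left sum_distrib_right algebra_simps sum.swap[of _ B])

lemma matrix_on_basis_apply:
  "orthonormal_basis B \<Longrightarrow> c \<in> B \<Longrightarrow> matrix_on_basis B u *v c = u c"
  by (simp add: matrix_on_basis_mult orthonormal_basis_sum_inner)

lemma psd_matrix_on_basis_scale:
  assumes "\<And>b. b \<in> B \<Longrightarrow> 0 \<le> h b"
  shows "psd (matrix_on_basis B (\<lambda>b. h b *\<^sub>R b))"
  unfolding psd_def
proof (intro conjI allI)
  show "transpose (matrix_on_basis B (\<lambda>b. h b *\<^sub>R b)) = matrix_on_basis B (\<lambda>b. h b *\<^sub>R b)"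
    by (simp add: matrix_on_basis_def transpose_def vec_eq_iff mult.commute mult.left_commute)
  fix x :: "real^'a"
  have "x \<bullet> (matrix_on_basis B (\<lambda>b. h b *\<^sub>R b) *v x) = (\<Sum>b\<in>B. h b * (b \<bullet> x)\<^sup>2)"
    by (simp add: matrix_on_basis_mult inner_sum_right power2_eq_square inner_commute algebra_simps)
  also have "\<dots> \<ge> 0" using assms by (intro sum_nonneg) auto
  finally show "0 \<le> x \<bullet> (matrix_on_basis B (\<lambda>b. h b *\<^sub>R b) *v x)" .
qed

lemma psd_mult_eq_0_if_quadratic_eq_0:
  fixes R :: "real^'n^'n"
  assumes "psd R" "x \<bullet> (R *v x) = 0"
  shows "R *v x = 0"
proof -
  have sym: "transpose R = R" and pos: "\<And>z. 0 \<le> z \<bullet> (R *v z)" using assms(1) unfolding psd_def by auto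
  have "y \<bullet> (R *v x) = 0" for y
  proof (rule linear_coeff_eq_0_if_quadratic_nonneg)
    fix t
    have "0 \<le> (x + t *\<^sub>R y) \<bullet> (R *v (x + t *\<^sub>R y))" by (rule pos)
    also have "\<dots> = 2 * t * (y \<bullet> (R *v x)) + t\<^sup>2 * (y \<bullet> (R *v y))"
      using assms(2)
      by (simp add: matrix_vector_right_distrib matrix_vector_mult_scaleR inner_add_left
          inner_add_right inner_symmetric_mult[OF sym, of x y] inner_commute[of "R *v x" y]
          power2_eq_square algebra_simps)
    finally show "0 \<le> 2 * t * (y \<bullet> (R *v x)) + t\<^sup>2 * (y \<bullet> (R *v y))" .
  qed
  from this[of "R *v x"] show ?thesis by simp
qed

lemma psd_square_root_unique:
  fixes R R' :: "real^'n^'n"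
  assumes psd: "psd R" "psd R'" and eq: "R ** R = R' ** R'"
  shows "R = R'"
proof -
  define D where "D = R - R'"
  have sym: "transpose R = R" "transpose R' = R'" using psd unfolding psd_def by auto
  then have "transpose D = D" unfolding D_def by (simp add: transpose_def vec_eq_iff)
  then obtain B where B: "orthonormal_basis B" and eig: "\<forall>b\<in>B. D *v b = (b \<bullet> (D *v b)) *\<^sub>R b"
    by (rule symmetric_matrix_orthonormal_eigenbasis)
  have "R *v b = R' *v b" if b: "b \<in> B" for b
  proof -
    define d where "d = b \<bullet> (D *v b)"
    have Db: "D *v b = d *\<^sub>R b" using eig b d_def by simp
    \<comment> \<open>test R R - R' R' = R D + D R' against the eigenvector b of D\<close>
    have "R *v (D *v b) + D *v (R' *v b) = R *v (R *v b) - R' *v (R' *v b)"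
      unfolding D_def by (simp add: matrix_vector_mult_diff_rdistrib matrix_vector_mult_diff_distrib)
    also have "\<dots> = 0" using eq by (simp add: matrix_vector_mul_assoc)
    finally have "b \<bullet> (R *v (D *v b)) + (D *v b) \<bullet> (R' *v b) = 0"
      by (metis inner_add_right inner_symmetric_mult[OF \<open>transpose D = D\<close>] inner_zero_right)
    then have "d * (b \<bullet> (R *v b) + b \<bullet> (R' *v b)) = 0"
      using Db by (simp add: matrix_vector_mult_scaleR algebra_simps)
    moreover have "0 \<le> b \<bullet> (R *v b)" "0 \<le> b \<bullet> (R' *v b)" using psd unfolding psd_def by auto
    ultimately consider "d = 0" | "b \<bullet> (R *v b) = 0" "b \<bullet> (R' *v b) = 0" by fastforce
    then show ?thesis
    proof cases
      case 1 then show ?thesis using Db unfolding D_def by (simp add: matrix_vector_mult_diff_rdistrib)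
    next
      case 2 then show ?thesis using psd_mult_eq_0_if_quadratic_eq_0 psd by metis
    qed
  qed
  then show ?thesis using orthonormal_basis_matrix_eqI[OF B] by blast
qed

lemma psd_sqrt_eqI:
  fixes S :: "real^'n^'n"
  assumes "psd S" "S ** S = X"
  shows "psd_sqrt X = S"
  unfolding psd_sqrt_def using assms psd_square_root_unique by blast

definition singular_basis :: "real^'r^'n \<Rightarrow> (real^'r) set \<Rightarrow> bool" where
  "singular_basis M B \<longleftrightarrow>
     orthonormal_basis B \<and> (\<forall>b\<in>B. \<forall>c\<in>B. b \<noteq> c \<longrightarrow> (M *v b) \<bullet> (M *v c) = 0)"

lemma singular_basis_exists: "\<exists>B. singular_basis (M :: real^'r^'n) B"
proof -
  obtain B where B: "orthonormal_basis B"
    and eig: "\<forall>b\<in>B. (transpose M ** M) *v b = (b \<bullet> ((transpose M ** M) *v b)) *\<^sub>R b"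
    using symmetric_matrix_orthonormal_eigenbasis[OF symmetric_gram] by blast
  have "(M *v b) \<bullet> (M *v c) = 0" if "b \<in> B" "c \<in> B" "b \<noteq> c" for b c
  proof -
    define l where "l = c \<bullet> ((transpose M ** M) *v c)"
    have "(M *v b) \<bullet> (M *v c) = b \<bullet> ((transpose M ** M) *v c)" by (rule inner_gram_mult[symmetric])
    also have "\<dots> = b \<bullet> (l *\<^sub>R c)" using eig that(2) l_def by simp
    also have "\<dots> = 0" using B that unfolding orthonormal_basis_def by simp
    finally show ?thesis .
  qed
  then show ?thesis using B unfolding singular_basis_def by blast
qed

lemma gram_mult_singular_basis:
  assumes "singular_basis M B" "b \<in> B"
  shows "(transpose M ** M) *v b = ((M *v b) \<bullet> (M *v b)) *\<^sub>R b"
proof (rule orthonormal_basis_vector_eqI)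
  show "orthonormal_basis B" using assms(1) unfolding singular_basis_def by simp
  fix c assume "c \<in> B"
  then show "c \<bullet> ((transpose M ** M) *v b) = c \<bullet> (((M *v b) \<bullet> (M *v b)) *\<^sub>R b)"
    using assms unfolding singular_basis_def orthonormal_basis_def by (auto simp: inner_gram_mult)
qed

lemma psd_sqrt_gram_singular_basis:
  assumes M: "singular_basis M B"
  shows "psd_sqrt (transpose M ** M) = matrix_on_basis B (\<lambda>b. norm (M *v b) *\<^sub>R b)"
proof (rule psd_sqrt_eqI)
  have B: "orthonormal_basis B" using M unfolding singular_basis_def by simp
  let ?S = "matrix_on_basis B (\<lambda>b. norm (M *v b) *\<^sub>R b)"
  show "psd ?S" by (rule psd_matrix_on_basis_scale) simp
  have "(?S ** ?S) *v b = (transpose M ** M) *v b" if "b \<in> B" for b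
    using B that gram_mult_singular_basis[OF M that]
    by (simp add: matrix_vector_mul_assoc[symmetric] matrix_on_basis_apply matrix_vector_mult_scaleR
        dot_square_norm power2_eq_square)
  then show "?S ** ?S = transpose M ** M" by (rule orthonormal_basis_matrix_eqI[OF B])
qed

lemma nuclear_norm_singular_basis:
  assumes M: "singular_basis M B"
  shows "nuclear_norm M = (\<Sum>b\<in>B. norm (M *v b))"
proof -
  have B: "orthonormal_basis B" using M unfolding singular_basis_def by simp
  then have "nuclear_norm M = (\<Sum>b\<in>B. b \<bullet> (norm (M *v b) *\<^sub>R b))"
    unfolding nuclear_norm_def psd_sqrt_gram_singular_basis[OF M] trace_eq_sum_orthonormal_basis[OF B]
    by (intro sum.cong) (simp_all add: matrix_on_basis_apply)
  also have "\<dots> = (\<Sum>b\<in>B. norm (M *v b))"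
    using B unfolding orthonormal_basis_def by simp
  finally show ?thesis .
qed

section \<open>The nuclear norm as a maximum over contractions\<close>

definition contraction_matrix :: "real^'r^'n \<Rightarrow> bool" where
  "contraction_matrix U \<longleftrightarrow> (\<forall>y. norm (U *v y) \<le> norm y)"

lemma loewner_le_gram_one_iff:
  fixes U :: "real^'r^'n"
  shows "loewner_le (transpose U ** U) (mat 1) \<longleftrightarrow> contraction_matrix U"
proof -
  have "transpose (A - B) = transpose A - transpose B" for A B :: "real^'r^'r"
    by (simp add: transpose_def vec_eq_iff)
  then have "transpose (mat 1 - transpose U ** U) = mat 1 - transpose U ** U"
    by (simp add: symmetric_gram)
  moreover have "y \<bullet> ((mat 1 - transpose U ** U) *v y) = y \<bullet> y - (U *v y) \<bullet> (U *v y)" for y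
    by (simp add: matrix_vector_mult_diff_rdistrib inner_diff_right inner_gram_mult)
  ultimately show ?thesis
    unfolding loewner_le_def psd_def contraction_matrix_def by (simp add: norm_le)
qed

lemma compact_contraction_matrices: "compact {U :: real^'r^'n. contraction_matrix U}"
  unfolding compact_eq_bounded_closed contraction_matrix_def
proof
  have "continuous_on UNIV (\<lambda>U :: real^'r^'n. U *v y)" for y
    by (intro linear_continuous_on bounded_linearI'
        matrix_vector_mult_add_rdistrib scaleR_matrix_vector_assoc[symmetric])
  then show "closed {U :: real^'r^'n. \<forall>y. norm (U *v y) \<le> norm y}"
    by (intro closed_Collect_all closed_Collect_le continuous_on_norm continuous_on_const)
  show "bounded {U :: real^'r^'n. \<forall>y. norm (U *v y) \<le> norm y}"
    unfolding bounded_iff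
  proof (intro exI ballI)
    fix U :: "real^'r^'n" assume U: "U \<in> {U. \<forall>y. norm (U *v y) \<le> norm y}"
    have entry: "\<bar>U$i$j\<bar> \<le> 1" for i j
    proof -
      have "\<bar>U$i$j\<bar> = \<bar>(U *v axis j 1)$i\<bar>" by (simp add: matrix_vector_mult_basis column_def)
      also have "\<dots> \<le> norm (U *v axis j 1)" by (rule component_le_norm_cart)
      also have "\<dots> \<le> norm (axis j (1::real))" using U by blast
      also have "\<dots> = 1" by simp
      finally show ?thesis .
    qed
    have "norm U \<le> (\<Sum>i\<in>UNIV. norm (U$i))" unfolding norm_vec_def by (rule L2_set_le_sum) simp
    also have "\<dots> \<le> (\<Sum>i\<in>UNIV. \<Sum>j\<in>UNIV. \<bar>U$i$j\<bar>)" by (intro sum_mono norm_le_l1_cart)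
    also have "\<dots> \<le> (\<Sum>i\<in>(UNIV::'n set). \<Sum>j\<in>(UNIV::'r set). 1)" by (intro sum_mono entry)
    finally show "norm U \<le> real (CARD('n) * CARD('r))" by simp
  qed
qed

lemma convex_contraction_matrices: "convex {U :: real^'r^'n. contraction_matrix U}"
  unfolding convex_def contraction_matrix_def
proof (intro ballI allI impI, clarify)
  fix U V :: "real^'r^'n" and u w :: real and y
  assume U: "\<forall>y. norm (U *v y) \<le> norm y" and V: "\<forall>y. norm (V *v y) \<le> norm y"
    and uw: "0 \<le> u" "0 \<le> w" "u + w = 1"
  have "norm ((u *\<^sub>R U + w *\<^sub>R V) *v y) = norm (u *\<^sub>R (U *v y) + w *\<^sub>R (V *v y))"
    by (simp add: matrix_vector_mult_add_rdistrib scaleR_matrix_vector_assoc)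
  also have "\<dots> \<le> u * norm (U *v y) + w * norm (V *v y)"
    using uw by (metis (no_types) abs_of_nonneg norm_scaleR norm_triangle_ineq)
  also have "\<dots> \<le> u * norm y + w * norm y"
    using uw U V by (intro add_mono mult_left_mono) auto
  finally show "norm ((u *\<^sub>R U + w *\<^sub>R V) *v y) \<le> norm y"
    using uw by (simp flip: distrib_right)
qed

lemma inner_contraction_le:
  assumes "contraction_matrix U" "norm b \<le> 1"
  shows "x \<bullet> (U *v b) \<le> norm x"
proof -
  have "x \<bullet> (U *v b) \<le> norm x * norm (U *v b)" by (rule norm_cauchy_schwarz)
  also have "\<dots> \<le> norm x * 1"
    using assms unfolding contraction_matrix_def by (intro mult_left_mono) (auto intro: order_trans)
  finally show ?thesis by simp
qed

lemma inner_le_nuclear_norm: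
  assumes "contraction_matrix U"
  shows "M \<bullet> U \<le> nuclear_norm M"
proof -
  obtain B where M: "singular_basis M B" using singular_basis_exists by blast
  then have B: "orthonormal_basis B" unfolding singular_basis_def by simp
  then have "M \<bullet> U = (\<Sum>b\<in>B. (M *v b) \<bullet> (U *v b))" by (rule inner_eq_sum_orthonormal_basis)
  also have "\<dots> \<le> (\<Sum>b\<in>B. norm (M *v b))"
    using B assms unfolding orthonormal_basis_def
    by (intro sum_mono inner_contraction_le) (auto simp: norm_eq_sqrt_inner)
  also have "\<dots> = nuclear_norm M" by (rule nuclear_norm_singular_basis[OF M, symmetric])
  finally show ?thesis .
qed

lemma inner_sgn_self: "x \<bullet> sgn x = norm x"
  by (cases "x = 0") (simp_all add: sgn_div_norm dot_square_norm power2_eq_square)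

\<comment> \<open>As sgn 0 = 0, W annihilates the kernel of M: it is only a partial isometry.\<close>
lemma polar_part_maximises_inner:
  assumes M: "singular_basis M B"
  defines "W \<equiv> matrix_on_basis B (\<lambda>b. sgn (M *v b))"
  shows "contraction_matrix W" and "M \<bullet> W = nuclear_norm M"
proof -
  have B: "orthonormal_basis B" using M unfolding singular_basis_def by simp
  show "contraction_matrix W"
    unfolding contraction_matrix_def
  proof
    fix y
    have "pairwise (\<lambda>b c. orthogonal (sgn (M *v b)) (sgn (M *v c))) B"
      unfolding pairwise_def orthogonal_def
    proof (intro ballI impI)
      fix b c assume "b \<in> B" "c \<in> B" "b \<noteq> c"
      then have "(M *v b) \<bullet> (M *v c) = 0" using M unfolding singular_basis_def by blast
      then show "sgn (M *v b) \<bullet> sgn (M *v c) = 0" by (simp add: sgn_div_norm)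
    qed
    then have "(norm (W *v y))\<^sup>2 = (\<Sum>b\<in>B. (norm ((b \<bullet> y) *\<^sub>R sgn (M *v b)))\<^sup>2)"
      using B unfolding W_def matrix_on_basis_mult orthonormal_basis_def
      by (intro norm_sum_Pythagorean pairwise_ortho_scaleR) simp_all
    also have "\<dots> \<le> (\<Sum>b\<in>B. (b \<bullet> y)\<^sup>2)"
      by (intro sum_mono) (simp add: norm_sgn power_mult_distrib)
    also have "\<dots> = y \<bullet> y"
      using orthonormal_basis_inner[OF B, of y y] by (simp add: power2_eq_square)
    finally have "(norm (W *v y))\<^sup>2 \<le> (norm y)\<^sup>2" by (simp add: dot_square_norm)
    then show "norm (W *v y) \<le> norm y" by (rule power2_le_imp_le) simp
  qed
  have "M \<bullet> W = (\<Sum>b\<in>B. (M *v b) \<bullet> sgn (M *v b))"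
    using B unfolding W_def inner_eq_sum_orthonormal_basis[OF B]
    by (intro sum.cong) (simp_all add: matrix_on_basis_apply)
  then show "M \<bullet> W = nuclear_norm M" by (simp add: inner_sgn_self nuclear_norm_singular_basis[OF M])
qed

lemma nuclear_norm_attained: "\<exists>U. contraction_matrix U \<and> M \<bullet> U = nuclear_norm M"
  using singular_basis_exists[of M] polar_part_maximises_inner by blast

lemma unit_vector_eq_if_inner_eq_1:
  fixes v w :: "'a::real_inner"
  assumes "norm v = 1" "norm w \<le> 1" "v \<bullet> w = 1"
  shows "w = v"
proof -
  have "(v - w) \<bullet> (v - w) = (norm v)\<^sup>2 - 2 * (v \<bullet> w) + (norm w)\<^sup>2"
    by (simp add: power2_norm_eq_inner inner_diff_left inner_diff_right inner_commute)
  also have "\<dots> \<le> 0" using assms by (simp add: power_le_one)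
  finally have "v - w = 0" by (meson inner_gt_zero_iff not_le)
  then show ?thesis by simp
qed

lemma nuclear_norm_maximiser_unique:
  assumes M: "singular_basis M B" and nz: "\<And>b. b \<in> B \<Longrightarrow> M *v b \<noteq> 0"
    and U: "contraction_matrix U" "M \<bullet> U = nuclear_norm M"
  shows "U = matrix_on_basis B (\<lambda>b. sgn (M *v b))"
proof -
  have B: "orthonormal_basis B" using M unfolding singular_basis_def by simp
  then have fin: "finite B" and unit: "\<And>b. b \<in> B \<Longrightarrow> norm b = 1"
    unfolding orthonormal_basis_def by (auto simp: norm_eq_sqrt_inner)
  have le: "(M *v b) \<bullet> (U *v b) \<le> norm (M *v b)" if "b \<in> B" for b
    using U(1) unit[OF that] by (intro inner_contraction_le) auto
  \<comment> \<open>equality in the sum of the termwise bounds forces equality in every term\<close>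
  have "(\<Sum>b\<in>B. norm (M *v b) - (M *v b) \<bullet> (U *v b)) = 0"
    using U(2) by (simp add: sum_subtractf inner_eq_sum_orthonormal_basis[OF B]
        nuclear_norm_singular_basis[OF M])
  then have eq: "(M *v b) \<bullet> (U *v b) = norm (M *v b)" if "b \<in> B" for b
    using that le fin by (subst (asm) sum_nonneg_eq_0_iff) auto
  have "U *v b = sgn (M *v b)" if b: "b \<in> B" for b
  proof (rule unit_vector_eq_if_inner_eq_1)
    show "norm (sgn (M *v b)) = 1" using nz[OF b] by (simp add: norm_sgn)
    show "norm (U *v b) \<le> 1" using U(1) unit[OF b] unfolding contraction_matrix_def by metis
    show "sgn (M *v b) \<bullet> (U *v b) = 1" using eq[OF b] nz[OF b] by (simp add: sgn_div_norm)
  qed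
  then show ?thesis using B by (intro orthonormal_basis_matrix_eqI[OF B]) (simp add: matrix_on_basis_apply)
qed

lemma matrix_inv_eqI:
  fixes S S' :: "real^'n^'n"
  assumes "S ** S' = mat 1" "S' ** S = mat 1"
  shows "matrix_inv S = S'"
  unfolding matrix_inv_def
proof (rule someI2[where a = S'])
  show "S ** S' = mat 1 \<and> S' ** S = mat 1" using assms by simp
  fix T assume T: "S ** T = mat 1 \<and> T ** S = mat 1"
  have "T = T ** (S ** S')" using assms by (simp add: matrix_mul_rid)
  also have "\<dots> = S'" using T by (simp add: matrix_mul_assoc matrix_mul_lid)
  finally show "T = S'" .
qed

lemma polar_factor_singular_basis:
  assumes M: "singular_basis M B" and nz: "\<And>b. b \<in> B \<Longrightarrow> M *v b \<noteq> 0"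
  shows "M ** matrix_inv (psd_sqrt (transpose M ** M)) = matrix_on_basis B (\<lambda>b. sgn (M *v b))"
proof -
  have B: "orthonormal_basis B" using M unfolding singular_basis_def by simp
  define S where "S = matrix_on_basis B (\<lambda>b. norm (M *v b) *\<^sub>R b)"
  define S' where "S' = matrix_on_basis B (\<lambda>b. inverse (norm (M *v b)) *\<^sub>R b)"
  have "S ** S' = mat 1" "S' ** S = mat 1"
    by (auto intro!: orthonormal_basis_matrix_eqI[OF B]
        simp: S_def S'_def matrix_vector_mul_assoc[symmetric] matrix_on_basis_apply[OF B]
          matrix_vector_mult_scaleR nz)
  then have "matrix_inv (psd_sqrt (transpose M ** M)) = S'"
    unfolding psd_sqrt_gram_singular_basis[OF M] S_def[symmetric] by (rule matrix_inv_eqI)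
  moreover have "M ** S' = matrix_on_basis B (\<lambda>b. sgn (M *v b))"
    by (auto intro!: orthonormal_basis_matrix_eqI[OF B]
        simp: S'_def matrix_vector_mul_assoc[symmetric] matrix_on_basis_apply[OF B]
          matrix_vector_mult_scaleR sgn_div_norm divide_inverse_commute)
  ultimately show ?thesis by simp
qed

lemma isometry_polar_part:
  assumes M: "singular_basis M B" and nz: "\<And>b. b \<in> B \<Longrightarrow> M *v b \<noteq> 0"
  defines "W \<equiv> matrix_on_basis B (\<lambda>b. sgn (M *v b))"
  shows "transpose W ** W = mat 1"
proof -
  have B: "orthonormal_basis B" using M unfolding singular_basis_def by simp
  have "c \<bullet> ((transpose W ** W) *v b) = c \<bullet> b" if "b \<in> B" "c \<in> B" for b c
  proof -
    have "c \<bullet> ((transpose W ** W) *v b) = sgn (M *v c) \<bullet> sgn (M *v b)"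
      using that by (simp add: inner_gram_mult W_def matrix_on_basis_apply[OF B])
    also have "\<dots> = c \<bullet> b"
    proof (cases "b = c")
      case True
      then show ?thesis using that nz B unfolding orthonormal_basis_def
        by (simp add: dot_square_norm[of "sgn (M *v c)"] norm_sgn)
    next
      case False
      then show ?thesis using that M unfolding singular_basis_def orthonormal_basis_def
        by (simp add: sgn_div_norm inner_commute)
    qed
    finally show ?thesis .
  qed
  then show ?thesis
    by (intro orthonormal_basis_matrix_eqI[OF B] orthonormal_basis_vector_eqI[OF B]) simp
qed

lemma injective_polar_factor:
  fixes M :: "real^'r^'n"
  assumes "inj ((*v) M)"
  defines "P \<equiv> M ** matrix_inv (psd_sqrt (transpose M ** M))"
  shows "transpose P ** P = mat 1"
    and "contraction_matrix U \<Longrightarrow> M \<bullet> U = nuclear_norm M \<Longrightarrow> U = P"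
proof -
  obtain B where M: "singular_basis M B" using singular_basis_exists by blast
  have "b \<noteq> 0" if "b \<in> B" for b
    using M that unfolding singular_basis_def orthonormal_basis_def by force
  then have nz: "M *v b \<noteq> 0" if "b \<in> B" for b
    using assms(1) that by (metis injD matrix_vector_mult_0_right)
  have P: "P = matrix_on_basis B (\<lambda>b. sgn (M *v b))"
    unfolding P_def by (rule polar_factor_singular_basis[OF M nz])
  show "transpose P ** P = mat 1"
    unfolding P by (rule isometry_polar_part[OF M nz])
  show "U = P" if "contraction_matrix U" "M \<bullet> U = nuclear_norm M"
    unfolding P by (rule nuclear_norm_maximiser_unique[OF M nz that])
qed

section \<open>Maximin over finitely many concave functions\<close>

definition prob_simplex :: "(real^'k::finite) set" where
  "prob_simplex = {\<mu>. (\<forall>k. 0 \<le> \<mu>$k) \<and> (\<Sum>k\<in>UNIV. \<mu>$k) = 1}"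

lemma Min_range_le_convex_combination:
  fixes x :: "'k::finite \<Rightarrow> real"
  assumes "\<mu> \<in> prob_simplex"
  shows "Min (range x) \<le> (\<Sum>k\<in>UNIV. \<mu>$k * x k)"
proof -
  have "Min (range x) = (\<Sum>k\<in>UNIV. \<mu>$k * Min (range x))"
    using assms unfolding prob_simplex_def by (simp flip: sum_distrib_right)
  also have "\<dots> \<le> (\<Sum>k\<in>UNIV. \<mu>$k * x k)"
    using assms unfolding prob_simplex_def by (intro sum_mono mult_left_mono) auto
  finally show ?thesis .
qed

lemma continuous_on_Min:
  fixes g :: "'k \<Rightarrow> 'a::topological_space \<Rightarrow> real"
  assumes "finite K" "K \<noteq> {}" "\<And>k. k \<in> K \<Longrightarrow> continuous_on S (g k)"
  shows "continuous_on S (\<lambda>x. Min ((\<lambda>k. g k x) ` K))"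
  using assms
proof (induction K rule: finite_ne_induct)
  case (insert k K)
  then have "continuous_on S (\<lambda>x. min (g k x) (Min ((\<lambda>k. g k x) ` K)))"
    by (intro continuous_on_min) auto
  then show ?case using insert by simp
qed simp

text \<open>Separate P from the open orthant above v; the normal of the separating hyperplane is
  nonnegative because P is closed downwards.\<close>
lemma prob_simplex_separation:
  fixes P :: "(real^'k::finite) set"
  assumes "convex P" "z0 \<in> P"
    and down: "\<And>z w. z \<in> P \<Longrightarrow> \<forall>k. w$k \<le> z$k \<Longrightarrow> w \<in> P"
    and below: "\<And>z. z \<in> P \<Longrightarrow> \<exists>k. z$k \<le> v"
  obtains \<mu> where "\<mu> \<in> prob_simplex" "\<And>z. z \<in> P \<Longrightarrow> \<mu> \<bullet> z \<le> v"
proof -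
  define Q where "Q = {z::real^'k. \<forall>k. v < z$k}"
  have "Q = (\<Inter>k. {z. v < axis k 1 \<bullet> z})" unfolding Q_def by (auto simp: inner_axis')
  then have "convex Q" by (simp add: convex_INT convex_halfspace_gt)
  moreover have "(\<chi> k. v + 1) \<in> Q" unfolding Q_def by simp
  moreover have "z \<notin> Q" if "z \<in> P" for z
    using below[OF that] unfolding Q_def by (auto simp: not_less)
  ultimately obtain a b where ab: "a \<noteq> 0" "\<forall>z\<in>P. a \<bullet> z \<le> b" "\<forall>z\<in>Q. b \<le> a \<bullet> z"
    using separating_hyperplane_sets[OF assms(1), of Q] assms(2) by blast
  have a_nonneg: "0 \<le> a$k" for k
  proof (rule ccontr)
    assume "\<not> 0 \<le> a$k"
    define t where "t = (\<bar>b\<bar> + \<bar>a \<bullet> z0\<bar> + 1) / (- a$k)"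
    have "t \<ge> 0" unfolding t_def using \<open>\<not> 0 \<le> a$k\<close> by (intro divide_nonneg_pos) auto
    then have "z0 - t *\<^sub>R axis k 1 \<in> P"
      by (intro down[OF assms(2)]) (simp add: axis_def)
    then have "a \<bullet> (z0 - t *\<^sub>R axis k 1) \<le> b" using ab(2) by blast
    then have "a \<bullet> z0 - t * a$k \<le> b" by (simp add: inner_diff_right inner_axis)
    moreover have "t * a$k = - (\<bar>b\<bar> + \<bar>a \<bullet> z0\<bar> + 1)" unfolding t_def using \<open>\<not> 0 \<le> a$k\<close> by simp
    ultimately show False by linarith
  qed
  define s where "s = (\<Sum>k\<in>UNIV. a$k)"
  have "s > 0"
  proof -
    obtain k where "a$k \<noteq> 0" using ab(1) by (auto simp: vec_eq_iff)
    moreover have "a$k \<le> s" unfolding s_def by (rule member_le_sum) (auto intro: a_nonneg)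
    ultimately show ?thesis using a_nonneg[of k] by simp
  qed
  have "b / s \<le> v + e" if "e > 0" for e
  proof -
    have "b \<le> a \<bullet> (\<chi> k. v + e)" using ab(3) that unfolding Q_def by simp
    also have "\<dots> = (v + e) * s" unfolding s_def by (simp add: inner_vec_def sum_distrib_left mult.commute)
    finally show ?thesis using \<open>s > 0\<close> by (simp add: divide_le_eq)
  qed
  then have "b / s \<le> v" by (rule field_le_epsilon)
  show ?thesis
  proof
    show "(1 / s) *\<^sub>R a \<in> prob_simplex"
      unfolding prob_simplex_def using \<open>s > 0\<close> a_nonneg by (simp add: s_def sum_divide_distrib[symmetric])
    show "(1 / s) *\<^sub>R a \<bullet> z \<le> v" if "z \<in> P" for z
    proof -
      have "(1 / s) *\<^sub>R a \<bullet> z = (a \<bullet> z) / s" by simp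
      also have "\<dots> \<le> b / s" using ab(2) that \<open>s > 0\<close> by (simp add: divide_right_mono)
      finally show ?thesis using \<open>b / s \<le> v\<close> by linarith
    qed
  qed
qed

lemma maximin_weights:
  fixes F :: "'k::finite \<Rightarrow> 'a::real_vector \<Rightarrow> real"
  assumes concave: "\<And>k. concave_on C (F k)" and "U0 \<in> C"
    and max: "\<And>U. U \<in> C \<Longrightarrow> Min (range (\<lambda>k. F k U)) \<le> Min (range (\<lambda>k. F k U0))"
  obtains \<mu> where "\<mu> \<in> prob_simplex"
    "\<And>U. U \<in> C \<Longrightarrow> (\<Sum>k\<in>UNIV. \<mu>$k * F k U) \<le> Min (range (\<lambda>k. F k U0))"
proof -
  define P where "P = {z :: real^'k. \<exists>U\<in>C. \<forall>k. z$k \<le> F k U}"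
  have "convex C" using concave_on_imp_convex[OF concave] .
  have P_convex: "convex P" unfolding convex_def
  proof (intro ballI allI impI)
    fix z1 z2 :: "real^'k" and u w :: real
    assume "z1 \<in> P" "z2 \<in> P" and uw: "0 \<le> u" "0 \<le> w" "u + w = 1"
    then obtain U1 U2 where U: "U1 \<in> C" "U2 \<in> C" "\<forall>k. z1$k \<le> F k U1" "\<forall>k. z2$k \<le> F k U2"
      unfolding P_def by blast
    have "(u *\<^sub>R z1 + w *\<^sub>R z2)$k \<le> F k (u *\<^sub>R U1 + w *\<^sub>R U2)" for k
    proof -
      have "(u *\<^sub>R z1 + w *\<^sub>R z2)$k \<le> u * F k U1 + w * F k U2"
        using uw U by (simp add: add_mono mult_left_mono)
      also have "\<dots> \<le> F k (u *\<^sub>R U1 + w *\<^sub>R U2)"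
        using concave[of k, unfolded concave_on_iff] U(1,2) uw by simp
      finally show ?thesis .
    qed
    moreover have "u *\<^sub>R U1 + w *\<^sub>R U2 \<in> C" using \<open>convex C\<close> U uw unfolding convex_def by blast
    ultimately show "u *\<^sub>R z1 + w *\<^sub>R z2 \<in> P" unfolding P_def by blast
  qed
  have P_nonempty: "(\<chi> k. F k U0) \<in> P" unfolding P_def using \<open>U0 \<in> C\<close> by auto
  have P_down: "w \<in> P" if "z \<in> P" "\<forall>k. w$k \<le> z$k" for z w
    using that unfolding P_def by (blast intro: order_trans)
  have P_below: "\<exists>k. z$k \<le> Min (range (\<lambda>k. F k U0))" if z: "z \<in> P" for z
  proof -
    obtain U where U: "U \<in> C" "\<forall>k. z$k \<le> F k U" using z unfolding P_def by blast
    have "Min (range (\<lambda>k. F k U)) \<in> range (\<lambda>k. F k U)" by (rule Min_in) auto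
    then obtain k where "Min (range (\<lambda>k. F k U)) = F k U" by blast
    then have "z$k \<le> Min (range (\<lambda>k. F k U0))" using spec[OF U(2), of k] max[OF U(1)] by linarith
    then show ?thesis ..
  qed
  obtain \<mu> where "\<mu> \<in> prob_simplex" and le: "\<And>z. z \<in> P \<Longrightarrow> \<mu> \<bullet> z \<le> Min (range (\<lambda>k. F k U0))"
    using prob_simplex_separation[of P, OF P_convex P_nonempty] P_down P_below by blast
  moreover have "(\<Sum>k\<in>UNIV. \<mu>$k * F k U) \<le> Min (range (\<lambda>k. F k U0))" if "U \<in> C" for U
    using le[of "\<chi> k. F k U"] that unfolding P_def by (auto simp: inner_vec_def)
  ultimately show ?thesis using that by blast
qed

section \<open>Duality\<close>

definition primal_objective :: "('k::finite \<Rightarrow> real^'r^'n) \<Rightarrow> ('k \<Rightarrow> real) \<Rightarrow> real^'r^'n \<Rightarrow> real" where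
  "primal_objective A c U = Min (range (\<lambda>k. 2 * (A k \<bullet> U) + c k))"

definition dual_objective :: "('k::finite \<Rightarrow> real^'r^'n) \<Rightarrow> ('k \<Rightarrow> real) \<Rightarrow> real^'k \<Rightarrow> real" where
  "dual_objective A c \<mu> = 2 * nuclear_norm (\<Sum>k\<in>UNIV. \<mu>$k *\<^sub>R A k) + (\<Sum>k\<in>UNIV. \<mu>$k * c k)"

lemma weighted_payoff_eq:
  "(\<Sum>k\<in>UNIV. \<mu>$k * (2 * (A k \<bullet> U) + c k))
     = 2 * ((\<Sum>k\<in>UNIV. \<mu>$k *\<^sub>R A k) \<bullet> U) + (\<Sum>k\<in>UNIV. \<mu>$k * c k)"
  by (simp add: inner_sum_left sum.distrib sum_distrib_left algebra_simps)

lemma weak_duality: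
  assumes "contraction_matrix U" "\<mu> \<in> prob_simplex"
  shows "primal_objective A c U \<le> dual_objective A c \<mu>"
proof -
  have "primal_objective A c U \<le> (\<Sum>k\<in>UNIV. \<mu>$k * (2 * (A k \<bullet> U) + c k))"
    unfolding primal_objective_def by (rule Min_range_le_convex_combination[OF assms(2)])
  also have "\<dots> \<le> dual_objective A c \<mu>"
    unfolding weighted_payoff_eq dual_objective_def using inner_le_nuclear_norm[OF assms(1)] by simp
  finally show ?thesis .
qed

lemma primal_maximiser_exists:
  "\<exists>U0. contraction_matrix U0 \<and>
     (\<forall>U. contraction_matrix U \<longrightarrow> primal_objective A c U \<le> primal_objective A c U0)"
proof -
  have "continuous_on {U. contraction_matrix U} (primal_objective A c)"
    unfolding primal_objective_def
    by (intro continuous_on_Min continuous_intros) auto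
  moreover have "contraction_matrix 0" unfolding contraction_matrix_def by simp
  ultimately show ?thesis
    using continuous_attains_sup[OF compact_contraction_matrices] by blast
qed

lemma strong_duality:
  assumes U0: "contraction_matrix U0"
    and max: "\<And>U. contraction_matrix U \<Longrightarrow> primal_objective A c U \<le> primal_objective A c U0"
  shows "\<exists>\<mu>0\<in>prob_simplex. dual_objective A c \<mu>0 = primal_objective A c U0"
proof -
  have "concave_on {U. contraction_matrix U} (\<lambda>U. 2 * (A k \<bullet> U) + c k)" for k
    unfolding concave_on_iff using convex_contraction_matrices
    by (simp add: inner_add_right algebra_simps flip: distrib_right)
  then obtain \<mu>0 where \<mu>0: "\<mu>0 \<in> prob_simplex"
    and le: "\<And>U. contraction_matrix U \<Longrightarrow>
      (\<Sum>k\<in>UNIV. \<mu>0$k * (2 * (A k \<bullet> U) + c k)) \<le> primal_objective A c U0"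
    by (rule maximin_weights[of "{U. contraction_matrix U}" "\<lambda>k U. 2 * (A k \<bullet> U) + c k" U0])
      (use U0 max in \<open>auto simp: primal_objective_def\<close>)
  obtain U where U: "contraction_matrix U"
    "(\<Sum>k\<in>UNIV. \<mu>0$k *\<^sub>R A k) \<bullet> U = nuclear_norm (\<Sum>k\<in>UNIV. \<mu>0$k *\<^sub>R A k)"
    using nuclear_norm_attained by blast
  have "dual_objective A c \<mu>0 = primal_objective A c U0"
  proof (rule antisym)
    show "dual_objective A c \<mu>0 \<le> primal_objective A c U0"
      using le[OF U(1)] U(2) unfolding dual_objective_def weighted_payoff_eq by simp
    show "primal_objective A c U0 \<le> dual_objective A c \<mu>0" by (rule weak_duality[OF U0 \<mu>0])
  qed
  then show ?thesis using \<mu>0 by blast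
qed

lemma optimal_pair_attains_nuclear_norm:
  assumes U0: "contraction_matrix U0"
    and max: "\<And>U. contraction_matrix U \<Longrightarrow> primal_objective A c U \<le> primal_objective A c U0"
    and \<mu>s: "\<mu>s \<in> prob_simplex"
    and min: "\<And>\<mu>. \<mu> \<in> prob_simplex \<Longrightarrow> dual_objective A c \<mu>s \<le> dual_objective A c \<mu>"
  shows "(\<Sum>k\<in>UNIV. \<mu>s$k *\<^sub>R A k) \<bullet> U0 = nuclear_norm (\<Sum>k\<in>UNIV. \<mu>s$k *\<^sub>R A k)"
proof (rule antisym)
  obtain \<mu>0 where "\<mu>0 \<in> prob_simplex" "dual_objective A c \<mu>0 = primal_objective A c U0"
    using strong_duality[OF U0 max] by blast
  then have "dual_objective A c \<mu>s \<le> primal_objective A c U0" using min by metis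
  also have "\<dots> \<le> (\<Sum>k\<in>UNIV. \<mu>s$k * (2 * (A k \<bullet> U0) + c k))"
    unfolding primal_objective_def by (rule Min_range_le_convex_combination[OF \<mu>s])
  finally show "nuclear_norm (\<Sum>k\<in>UNIV. \<mu>s$k *\<^sub>R A k) \<le> (\<Sum>k\<in>UNIV. \<mu>s$k *\<^sub>R A k) \<bullet> U0"
    unfolding dual_objective_def weighted_payoff_eq by simp
qed (rule inner_le_nuclear_norm[OF U0])

theorem mainTheorem3:
  fixes A :: "'k::finite \<Rightarrow> real^'r^'n"
    and c :: "'k \<Rightarrow> real"
  assumes "CARD('r) \<le> CARD('n)"
  defines "feas \<equiv> {U :: real^'r^'n. loewner_le (transpose U ** U) (mat 1)}"
    and "f \<equiv> (\<lambda>U :: real^'r^'n. Min (range (\<lambda>k. 2 * trace (transpose (A k) ** U) + c k)))"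
    and "\<Delta> \<equiv> {\<mu> :: real^'k. (\<forall>k. 0 \<le> \<mu> $ k) \<and> (\<Sum>k\<in>UNIV. \<mu> $ k) = 1}"
    and "Amu \<equiv> (\<lambda>\<mu> :: real^'k. \<Sum>k\<in>UNIV. (\<mu> $ k) *\<^sub>R A k)"
    and "g \<equiv> (\<lambda>\<mu> :: real^'k. 2 * nuclear_norm (\<Sum>k\<in>UNIV. (\<mu> $ k) *\<^sub>R A k) + (\<Sum>k\<in>UNIV. \<mu> $ k * c k))"
  shows "(\<exists>U0 \<in> feas. \<exists>\<mu>0 \<in> \<Delta>.
            (\<forall>U \<in> feas. f U \<le> f U0) \<and> (\<forall>\<mu> \<in> \<Delta>. g \<mu>0 \<le> g \<mu>) \<and> f U0 = g \<mu>0)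
       \<and> (\<forall>\<mu>s \<in> \<Delta>. (\<forall>\<mu> \<in> \<Delta>. g \<mu>s \<le> g \<mu>) \<longrightarrow> rank (Amu \<mu>s) = CARD('r) \<longrightarrow>
            (let Us = Amu \<mu>s ** matrix_inv (psd_sqrt (transpose (Amu \<mu>s) ** Amu \<mu>s))
             in Us \<in> feas \<and> (\<forall>U \<in> feas. f U \<le> f Us) \<and> transpose Us ** Us = mat 1))"
proof -
  have feas: "feas = {U. contraction_matrix U}"
    unfolding feas_def by (simp add: loewner_le_gram_one_iff)
  have f: "f = primal_objective A c" and g: "g = dual_objective A c" and \<Delta>: "\<Delta> = prob_simplex"
    unfolding f_def g_def \<Delta>_def primal_objective_def dual_objective_def prob_simplex_def
    by (simp_all add: trace_transpose_mult_eq_inner)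
  obtain U0 where U0: "contraction_matrix U0"
    and max: "\<And>U. contraction_matrix U \<Longrightarrow> primal_objective A c U \<le> primal_objective A c U0"
    using primal_maximiser_exists by blast
  obtain \<mu>0 where "\<mu>0 \<in> prob_simplex" "dual_objective A c \<mu>0 = primal_objective A c U0"
    using strong_duality[OF U0 max] by blast
  moreover have "\<mu> \<in> prob_simplex \<Longrightarrow> dual_objective A c \<mu>0 \<le> dual_objective A c \<mu>" for \<mu>
    using weak_duality[OF U0] calculation(2) by metis
  ultimately have saddle: "\<exists>U0 \<in> feas. \<exists>\<mu>0 \<in> \<Delta>.
      (\<forall>U \<in> feas. f U \<le> f U0) \<and> (\<forall>\<mu> \<in> \<Delta>. g \<mu>0 \<le> g \<mu>) \<and> f U0 = g \<mu>0"
    unfolding feas f g \<Delta> using U0 max by fastforce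
  have "let Us = Amu \<mu>s ** matrix_inv (psd_sqrt (transpose (Amu \<mu>s) ** Amu \<mu>s))
      in Us \<in> feas \<and> (\<forall>U \<in> feas. f U \<le> f Us) \<and> transpose Us ** Us = mat 1"
    if \<mu>s: "\<mu>s \<in> prob_simplex" "\<forall>\<mu> \<in> prob_simplex. dual_objective A c \<mu>s \<le> dual_objective A c \<mu>"
      and rank: "rank (Amu \<mu>s) = CARD('r)" for \<mu>s
  proof -
    have "inj ((*v) (Amu \<mu>s))" using rank by (simp add: full_rank_injective)
    \<comment> \<open>every primal maximiser attains the nuclear norm, so the polar factor is the only one\<close>
    moreover have "Amu \<mu>s \<bullet> U0 = nuclear_norm (Amu \<mu>s)"
      unfolding Amu_def using optimal_pair_attains_nuclear_norm[OF U0 max] \<mu>s by blast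
    ultimately show ?thesis
      using injective_polar_factor[of "Amu \<mu>s"] U0 max unfolding Let_def feas f by force
  qed
  then show ?thesis using saddle unfolding g \<Delta> by blast
qed

end
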